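(* (Working in $\mathbf{ZF}$.) Suppose that $X$ is a weakly normal generalized topological space and that the Wallman space $\mathcal W(X,\mathrm{Cl}_X)$ is compact. Then, for $\mathcal C=\mathrm{Cl}_X$, the collection $\mathrm{Op}^w_{\mathcal W(X,\mathcal C)}$ is stable under finite unions and generates the topology of $\mathcal W(X,\mathcal C)$.
   Context: A generalized topological space (gts) $(X,\mathrm{Op}_X,\mathrm{Cov}_X)$ is in the sense of Delfs–Knebusch ($\mathrm{Op}_X\subseteq\mathcal P(X)$ contains $\emptyset,X$, is closed under finite unions and intersections, and $\mathrm{Cov}_X\subseteq\mathcal P(\mathrm{Op}_X)$ is a collection of admissible coverings satisfying the Delfs–Knebusch axioms). $\mathrm{Cl}_X=\{X\setminus U:U\in\mathrm{Op}_X\}$; $X_{top}$ is $X$ with the topology generated by $\mathrm{Op}_X$. $X$ is weakly normal if for all disjoint $A_1,A_2\subseteq X$, each a singleton or in $\mathrm{Cl}_X$, there are disjoint $W_1,W_2\in\mathrm{Op}_X$ with $A_i\subseteq W_i$. For the ring $\mathcal C=\mathrm{Cl}_X$, $\mathcal W(X,\mathcal C)$ is the set of ultrafilters (maximal filters) in $\mathcal C$ with the topology whose closed base is $\{[A]_{\mathcal C}:A\in\mathcal C\}$, $[A]_{\mathcal C}=\{p\in\mathcal W(X,\mathcal C):A\in p\}$. The map $w(x)=\{A\in\mathcal C:x\in A\}$ embeds $X_{top}$ homeomorphically onto a dense subset of $\mathcal W(X,\mathcal C)$, and we identify $X$ with $w(X)$, so $\mathcal W(X,\mathcal C)$ is a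 compactification of $X_{top}$. For $U\in\mathrm{Op}_X$, $\mathrm{Ex}_{\mathcal W(X,\mathcal C)}(U)=\mathcal W(X,\mathcal C)\setminus\mathrm{cl}_{\mathcal W(X,\mathcal C)}(X\setminus U)$, and $\mathrm{Op}^w_{\mathcal W(X,\mathcal C)}=\{\mathrm{Ex}_{\mathcal W(X,\mathcal C)}(U):U\in\mathrm{Op}_X\}$. *)

theory Defs
  imports "HOL-Analysis.Analysis"
begin

text \<open>A gts is a triple (X, Op, Cov); elements of Cov are admissible families,
  each being an admissible covering of its union.\<close>

definition gts :: "'a set \<Rightarrow> 'a set set \<Rightarrow> 'a set set set \<Rightarrow> bool" where
  "gts X Op Cov \<longleftrightarrow>
     Op \<subseteq> Pow X \<and> Cov \<subseteq> Pow Op \<and>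
     {} \<in> Op \<and> X \<in> Op \<and>
     (\<forall>U\<in>Op. \<forall>V\<in>Op. U \<union> V \<in> Op \<and> U \<inter> V \<in> Op) \<and>
     (\<forall>\<U>. \<U> \<subseteq> Op \<and> finite \<U> \<longrightarrow> \<U> \<in> Cov) \<and>
     (\<forall>\<U>\<in>Cov. \<Union>\<U> \<in> Op) \<and>
     (\<forall>\<U>\<in>Cov. \<forall>V\<in>Op. (\<lambda>U. U \<inter> V) ` \<U> \<in> Cov) \<and>
     (\<forall>\<U>\<in>Cov. \<forall>\<V>. (\<forall>U\<in>\<U>. \<V> U \<in> Cov \<and> \<Union>(\<V> U) = U) \<longrightarrow> (\<Union>U\<in>\<U>. \<V> U) \<in> Cov) \<and>
     (\<forall>\<U> \<V>. \<U> \<subseteq> Op \<and> \<V> \<in> Cov \<and> \<Union>\<V> = \<Union>\<U> \<and> (\<forall>V\<in>\<V>. \<exists>U\<in>\<U>. V \<subseteq> U)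
        \<longrightarrow> \<U> \<in> Cov) \<and>
     (\<forall>\<U> \<V>. \<U> \<subseteq> Op \<and> \<V> \<in> Cov \<and> \<Union>\<V> = \<Union>\<U> \<and> (\<forall>V\<in>\<V>. (\<lambda>U. U \<inter> V) ` \<U> \<in> Cov)
        \<longrightarrow> \<U> \<in> Cov)"

definition Cl :: "'a set \<Rightarrow> 'a set set \<Rightarrow> 'a set set" where
  "Cl X Op = {X - U | U. U \<in> Op}"

definition weakly_normal :: "'a set \<Rightarrow> 'a set set \<Rightarrow> bool" where
  "weakly_normal X Op \<longleftrightarrow>
     (\<forall>A1 A2. ((\<exists>x\<in>X. A1 = {x}) \<or> A1 \<in> Cl X Op) \<longrightarrow>
              ((\<exists>x\<in>X. A2 = {x}) \<or> A2 \<in> Cl X Op) \<longrightarrow> A1 \<inter> A2 = {} \<longrightarrow>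
              (\<exists>W1\<in>Op. \<exists>W2\<in>Op. W1 \<inter> W2 = {} \<and> A1 \<subseteq> W1 \<and> A2 \<subseteq> W2))"

definition set_filter :: "'a set set \<Rightarrow> 'a set set \<Rightarrow> bool" where
  "set_filter C F \<longleftrightarrow> F \<subseteq> C \<and> F \<noteq> {} \<and> {} \<notin> F \<and>
     (\<forall>A\<in>F. \<forall>B\<in>F. A \<inter> B \<in> F) \<and> (\<forall>A\<in>F. \<forall>B\<in>C. A \<subseteq> B \<longrightarrow> B \<in> F)"

definition set_ultrafilter :: "'a set set \<Rightarrow> 'a set set \<Rightarrow> bool" where
  "set_ultrafilter C F \<longleftrightarrow> set_filter C F \<and> (\<forall>G. set_filter C G \<and> F \<subseteq> G \<longrightarrow> G = F)"

definition Wallman :: "'a set set \<Rightarrow> 'a set set set" where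
  "Wallman C = {p. set_ultrafilter C p}"

definition wbase :: "'a set set \<Rightarrow> 'a set \<Rightarrow> 'a set set set" where
  "wbase C A = {p \<in> Wallman C. A \<in> p}"

definition Wallman_topology :: "'a set set \<Rightarrow> 'a set set topology" where
  "Wallman_topology C =
     subtopology (topology_generated_by {UNIV - wbase C A | A. A \<in> C}) (Wallman C)"

definition wmap :: "'a set set \<Rightarrow> 'a \<Rightarrow> 'a set set" where
  "wmap C x = {A \<in> C. x \<in> A}"

definition Ex_W :: "'a set \<Rightarrow> 'a set set \<Rightarrow> 'a set \<Rightarrow> 'a set set set" where
  "Ex_W X C U = Wallman C - (Wallman_topology C closure_of (wmap C ` (X - U)))"

definition OpW :: "'a set \<Rightarrow> 'a set set \<Rightarrow> 'a set set set set" where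
  "OpW X Op = {Ex_W X (Cl X Op) U | U. U \<in> Op}"

end

theory Submission
  imports Defs
begin

(* For A in Cl X, weak normality makes every w(x) an ultrafilter, and every open
   neighbourhood of an ultrafilter p in [A] contains w(D) for some D in p; since D meets A,
   the closure of w(A) is exactly the basic closed set [A].  Hence Ex(U) = W - [X - U] is the
   trace on W of a subbasic open set, so the sets Ex(U) generate the Wallman topology, and
   [A \<inter> B] = [A] \<inter> [B] gives Ex(U \<union> V) = Ex(U) \<union> Ex(V). *)

lemma generate_topology_on_trace:
  assumes traces: "(\<inter>) W ` S \<subseteq> (\<inter>) W ` S'"
    and "generate_topology_on S t"
  shows "\<exists>t'. generate_topology_on S' t' \<and> W \<inter> t = W \<inter> t'"
  using assms(2)
proof (induction rule: generate_topology_on.induct)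
  case Empty
  show ?case by (blast intro: generate_topology_on.Empty)
next
  case (Int a b)
  then obtain a' b' where "generate_topology_on S' a'" "W \<inter> a = W \<inter> a'"
    and "generate_topology_on S' b'" "W \<inter> b = W \<inter> b'"
    by blast
  then show ?case by (blast intro: generate_topology_on.Int)
next
  case (UN K)
  then obtain f where f: "\<And>k. k \<in> K \<Longrightarrow> generate_topology_on S' (f k) \<and> W \<inter> k = W \<inter> f k"
    by metis
  then have "W \<inter> \<Union>K = W \<inter> \<Union>(f ` K)" by blast
  moreover have "generate_topology_on S' (\<Union>(f ` K))"
    using f by (blast intro: generate_topology_on.UN)
  ultimately show ?case by blast
next
  case (Basis s)
  then obtain s' where "s' \<in> S'" "W \<inter> s = W \<inter> s'" using traces by blast
  then show ?case by (blast intro: generate_topology_on.Basis)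
qed

lemma subtopology_topology_generated_by_traces:
  assumes "(\<inter>) W ` S = (\<inter>) W ` S'"
  shows "subtopology (topology_generated_by S) W = subtopology (topology_generated_by S') W"
proof -
  have "openin (subtopology (topology_generated_by T') W) u"
    if u: "openin (subtopology (topology_generated_by T) W) u"
      and traces: "(\<inter>) W ` T \<subseteq> (\<inter>) W ` T'"
    for T T' :: "'a set set" and u
  proof -
    obtain t where "generate_topology_on T t" "u = t \<inter> W"
      using u unfolding openin_subtopology openin_topology_generated_by_iff by blast
    moreover obtain t' where "generate_topology_on T' t'" "W \<inter> t = W \<inter> t'"
      using generate_topology_on_trace[OF traces calculation(1)] by blast
    ultimately show ?thesis
      by (auto simp: openin_subtopology openin_topology_generated_by_iff)
  qed
  then show ?thesis
    using assms by (auto simp: topology_eq)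
qed

definition Wallman_subbase :: "'a set set \<Rightarrow> 'a set set set set" where
  "Wallman_subbase C = (\<lambda>A. UNIV - wbase C A) ` C"

lemma Wallman_topology_eq:
  "Wallman_topology C = subtopology (topology_generated_by (Wallman_subbase C)) (Wallman C)"
  by (simp add: Wallman_topology_def Wallman_subbase_def Setcompr_eq_image)

lemma Wallman_filter: "p \<in> Wallman C \<Longrightarrow> set_filter C p"
  by (simp add: Wallman_def set_ultrafilter_def)

lemma wbase_empty [simp]: "wbase C {} = {}"
  by (auto simp: wbase_def Wallman_def set_ultrafilter_def set_filter_def)

lemma topspace_Wallman_topology:
  assumes "{} \<in> C"
  shows "topspace (Wallman_topology C) = Wallman C"
proof -
  have "UNIV \<in> Wallman_subbase C"
    using assms unfolding Wallman_subbase_def by force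
  then show ?thesis
    by (auto simp: Wallman_topology_eq)
qed

lemma closedin_Wallman_topology_wbase:
  assumes "{} \<in> C" "A \<in> C"
  shows "closedin (Wallman_topology C) (wbase C A)"
proof -
  have "openin (topology_generated_by (Wallman_subbase C)) (UNIV - wbase C A)"
    using assms(2) by (auto simp: Wallman_subbase_def intro: topology_generated_by_Basis)
  then have "openin (Wallman_topology C) (Wallman C - wbase C A)"
    unfolding Wallman_topology_eq openin_subtopology by blast
  then show ?thesis
    using assms(1) by (simp add: closedin_def topspace_Wallman_topology wbase_def Diff_Diff_Int)
qed

lemma wbase_Int:
  assumes "A \<in> C" "B \<in> C"
  shows "wbase C (A \<inter> B) = wbase C A \<inter> wbase C B"
proof -
  have "A \<inter> B \<in> p \<longleftrightarrow> A \<in> p \<and> B \<in> p" if "p \<in> Wallman C" for p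
    using Wallman_filter[OF that] assms unfolding set_filter_def by (meson Int_lower1 Int_lower2)
  then show ?thesis by (auto simp: wbase_def)
qed

lemma ultrafilter_disjoint_member:
  assumes ultra: "set_ultrafilter C p"
    and C_Int: "\<And>A B. A \<in> C \<Longrightarrow> B \<in> C \<Longrightarrow> A \<inter> B \<in> C"
    and B: "B \<in> C" "B \<notin> p"
  shows "\<exists>D\<in>p. D \<inter> B = {}"
proof (rule ccontr)
  assume meets: "\<not> (\<exists>D\<in>p. D \<inter> B = {})"
  have p: "set_filter C p" using ultra by (simp add: set_ultrafilter_def)
  then obtain D0 where "D0 \<in> p" by (auto simp: set_filter_def)
  define G where "G = {E \<in> C. \<exists>D\<in>p. D \<inter> B \<subseteq> E}"
  have "set_filter C G"
    unfolding set_filter_def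
  proof (intro conjI ballI impI)
    show "G \<subseteq> C" "{} \<notin> G" using meets by (auto simp: G_def)
    show "G \<noteq> {}" using \<open>D0 \<in> p\<close> B(1) unfolding G_def by blast
  next
    fix A1 A2 assume "A1 \<in> G" "A2 \<in> G"
    then obtain D1 D2 where "D1 \<in> p" "D2 \<in> p" "D1 \<inter> B \<subseteq> A1" "D2 \<inter> B \<subseteq> A2"
      and "A1 \<in> C" "A2 \<in> C"
      unfolding G_def by blast
    moreover have "D1 \<inter> D2 \<in> p" using p calculation(1,2) by (simp add: set_filter_def)
    moreover have "(D1 \<inter> D2) \<inter> B \<subseteq> A1 \<inter> A2" using calculation(3,4) by blast
    ultimately show "A1 \<inter> A2 \<in> G" unfolding G_def using C_Int[of A1 A2] by blast
  next
    fix A1 A2 assume "A1 \<in> G" "A2 \<in> C" "A1 \<subseteq> A2"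
    then show "A2 \<in> G" unfolding G_def by blast
  qed
  moreover have "p \<subseteq> G" using p unfolding G_def set_filter_def by auto
  ultimately have "G = p" using ultra by (simp add: set_ultrafilter_def)
  moreover have "B \<in> G" using \<open>D0 \<in> p\<close> B(1) unfolding G_def by blast
  ultimately show False using B(2) by simp
qed

lemma Wallman_open_contains_wmap_image:
  assumes C_Int: "\<And>A B. A \<in> C \<Longrightarrow> B \<in> C \<Longrightarrow> A \<inter> B \<in> C"
    and "generate_topology_on (Wallman_subbase C) t"
  shows "\<forall>p \<in> t \<inter> Wallman C. \<exists>D\<in>p. wmap C ` D \<subseteq> t"
  using assms(2)
proof (induction rule: generate_topology_on.induct)
  case Empty
  show ?case by blast
next
  case (Int a b)
  show ?case
  proof
    fix p assume p: "p \<in> a \<inter> b \<inter> Wallman C"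
    obtain D1 where D1: "D1 \<in> p" "wmap C ` D1 \<subseteq> a" using Int.IH(1) p by blast
    obtain D2 where D2: "D2 \<in> p" "wmap C ` D2 \<subseteq> b" using Int.IH(2) p by blast
    have "set_filter C p" using p by (intro Wallman_filter) blast
    then have "D1 \<inter> D2 \<in> p" using D1 D2 by (simp add: set_filter_def)
    moreover have "wmap C ` (D1 \<inter> D2) \<subseteq> a \<inter> b" using D1 D2 by blast
    ultimately show "\<exists>D\<in>p. wmap C ` D \<subseteq> a \<inter> b" by blast
  qed
next
  case (UN K)
  show ?case
  proof
    fix p assume "p \<in> \<Union>K \<inter> Wallman C"
    then obtain k where "k \<in> K" "p \<in> k \<inter> Wallman C" by blast
    then obtain D where "D \<in> p" "wmap C ` D \<subseteq> k" using UN.IH by blast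
    then show "\<exists>D\<in>p. wmap C ` D \<subseteq> \<Union>K" using \<open>k \<in> K\<close> by blast
  qed
next
  case (Basis s)
  then obtain B where B: "B \<in> C" "s = UNIV - wbase C B"
    by (auto simp: Wallman_subbase_def)
  show ?case
  proof
    fix p assume p: "p \<in> s \<inter> Wallman C"
    then have "set_ultrafilter C p" "B \<notin> p"
      using B by (auto simp: Wallman_def wbase_def)
    then obtain D where "D \<in> p" "D \<inter> B = {}"
      using ultrafilter_disjoint_member C_Int B(1) by blast
    moreover have "wmap C ` D \<subseteq> s"
      using calculation B by (auto simp: wmap_def wbase_def)
    ultimately show "\<exists>D\<in>p. wmap C ` D \<subseteq> s" by blast
  qed
qed

lemma closure_of_wmap_image:
  assumes C_Int: "\<And>A B. A \<in> C \<Longrightarrow> B \<in> C \<Longrightarrow> A \<inter> B \<in> C"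
    and "{} \<in> C" "A \<in> C"
    and wmap_A: "wmap C ` A \<subseteq> Wallman C"
  shows "Wallman_topology C closure_of (wmap C ` A) = wbase C A"
proof
  have "wmap C ` A \<subseteq> wbase C A"
    using wmap_A \<open>A \<in> C\<close> by (auto simp: wbase_def wmap_def)
  then show "Wallman_topology C closure_of (wmap C ` A) \<subseteq> wbase C A"
    using closedin_Wallman_topology_wbase[OF \<open>{} \<in> C\<close> \<open>A \<in> C\<close>] by (rule closure_of_minimal)
next
  show "wbase C A \<subseteq> Wallman_topology C closure_of (wmap C ` A)"
  proof
    fix p assume "p \<in> wbase C A"
    then have pW: "p \<in> Wallman C" and "A \<in> p" by (auto simp: wbase_def)
    have "\<exists>y\<in>wmap C ` A. y \<in> T" if "p \<in> T" and T: "openin (Wallman_topology C) T" for T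
    proof -
      obtain t where t: "generate_topology_on (Wallman_subbase C) t" "T = t \<inter> Wallman C"
        using T unfolding Wallman_topology_eq openin_subtopology openin_topology_generated_by_iff
        by blast
      then obtain D where "D \<in> p" "wmap C ` D \<subseteq> t"
        using Wallman_open_contains_wmap_image[OF C_Int t(1)] \<open>p \<in> T\<close> by blast
      moreover have "A \<inter> D \<in> p" "{} \<notin> p"
        using Wallman_filter[OF pW] \<open>A \<in> p\<close> \<open>D \<in> p\<close> by (auto simp: set_filter_def)
      ultimately obtain x where "x \<in> A" "wmap C x \<in> t"
        by (metis disjoint_iff image_subset_iff inf_commute)
      then show ?thesis using wmap_A t(2) by blast
    qed
    then show "p \<in> Wallman_topology C closure_of (wmap C ` A)"
      using pW \<open>{} \<in> C\<close> by (auto simp: in_closure_of topspace_Wallman_topology)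
  qed
qed

lemma wmap_in_Wallman:
  assumes C_Int: "\<And>A B. A \<in> C \<Longrightarrow> B \<in> C \<Longrightarrow> A \<inter> B \<in> C"
    and "x \<in> T" "T \<in> C"
    and separating: "\<And>B. B \<in> C \<Longrightarrow> x \<notin> B \<Longrightarrow> \<exists>A\<in>C. x \<in> A \<and> A \<inter> B = {}"
  shows "wmap C x \<in> Wallman C"
proof -
  have filter: "set_filter C (wmap C x)"
    using assms(2,3) C_Int by (auto simp: set_filter_def wmap_def)
  have "G \<subseteq> wmap C x" if G: "set_filter C G" "wmap C x \<subseteq> G" for G
  proof
    fix B assume "B \<in> G"
    then have "B \<in> C" using G(1) by (auto simp: set_filter_def)
    show "B \<in> wmap C x"
    proof (rule ccontr)
      assume "B \<notin> wmap C x"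
      then obtain A where "A \<in> C" "x \<in> A" "A \<inter> B = {}"
        using separating \<open>B \<in> C\<close> by (auto simp: wmap_def)
      then have "A \<in> G" using G(2) by (auto simp: wmap_def)
      then show False
        using G(1) \<open>B \<in> G\<close> \<open>A \<inter> B = {}\<close> unfolding set_filter_def by metis
    qed
  qed
  then show ?thesis
    using filter by (auto simp: Wallman_def set_ultrafilter_def)
qed

lemma Diff_in_Cl: "U \<in> Op \<Longrightarrow> X - U \<in> Cl X Op"
  by (auto simp: Cl_def)

lemma Cl_subset: "A \<in> Cl X Op \<Longrightarrow> A \<subseteq> X"
  by (auto simp: Cl_def)

lemma gts_Op_lattice:
  assumes "gts X Op Cov"
  shows "{} \<in> Op" "X \<in> Op" "\<And>U V. U \<in> Op \<Longrightarrow> V \<in> Op \<Longrightarrow> U \<union> V \<in> Op"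
proof -
  have "{} \<in> Op \<and> X \<in> Op \<and> (\<forall>U\<in>Op. \<forall>V\<in>Op. U \<union> V \<in> Op \<and> U \<inter> V \<in> Op)"
    using assms unfolding gts_def by (elim conjE) (intro conjI)
  then show "{} \<in> Op" "X \<in> Op" "\<And>U V. U \<in> Op \<Longrightarrow> V \<in> Op \<Longrightarrow> U \<union> V \<in> Op"
    by simp_all
qed

lemma Cl_Int:
  assumes "gts X Op Cov" "A \<in> Cl X Op" "B \<in> Cl X Op"
  shows "A \<inter> B \<in> Cl X Op"
proof -
  obtain U V where "U \<in> Op" "V \<in> Op" "A = X - U" "B = X - V"
    using assms(2,3) by (auto simp: Cl_def)
  then show ?thesis
    using Diff_in_Cl[OF gts_Op_lattice(3)[OF assms(1)], of U V X] by (simp add: Diff_Un)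
qed

lemma empty_in_Cl:
  assumes "gts X Op Cov"
  shows "{} \<in> Cl X Op"
  using Diff_in_Cl[where X = X, OF gts_Op_lattice(2)[OF assms]] by simp

lemma top_in_Cl:
  assumes "gts X Op Cov"
  shows "X \<in> Cl X Op"
  using Diff_in_Cl[where X = X, OF gts_Op_lattice(1)[OF assms]] by simp

lemma weakly_normal_separates_point:
  assumes "weakly_normal X Op" "x \<in> X" "B \<in> Cl X Op" "x \<notin> B"
  shows "\<exists>A\<in>Cl X Op. x \<in> A \<and> A \<inter> B = {}"
proof -
  have point: "(\<exists>y\<in>X. {x} = {y}) \<or> {x} \<in> Cl X Op" using assms(2) by blast
  have closed: "(\<exists>y\<in>X. B = {y}) \<or> B \<in> Cl X Op" using assms(3) by blast
  have "{x} \<inter> B = {}" using assms(4) by blast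
  then obtain W1 W2 where "W1 \<in> Op" "W2 \<in> Op" "W1 \<inter> W2 = {}" "{x} \<subseteq> W1" "B \<subseteq> W2"
    using assms(1)[unfolded weakly_normal_def, rule_format, OF point closed] by blast
  then show ?thesis
    using assms(2) by (intro bexI[of _ "X - W2"] Diff_in_Cl) auto
qed

lemma wmap_Cl_in_Wallman:
  assumes "gts X Op Cov" "weakly_normal X Op" "x \<in> X"
  shows "wmap (Cl X Op) x \<in> Wallman (Cl X Op)"
  by (rule wmap_in_Wallman[OF Cl_Int[OF assms(1)] assms(3) top_in_Cl[OF assms(1)]
        weakly_normal_separates_point[OF assms(2,3)]])

lemma Ex_W_eq_Diff_wbase:
  assumes "gts X Op Cov" "weakly_normal X Op" "U \<in> Op"
  shows "Ex_W X (Cl X Op) U = Wallman (Cl X Op) - wbase (Cl X Op) (X - U)"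
proof -
  have "wmap (Cl X Op) ` (X - U) \<subseteq> Wallman (Cl X Op)"
    using wmap_Cl_in_Wallman[OF assms(1,2)] by blast
  then show ?thesis
    unfolding Ex_W_def
    by (simp add: closure_of_wmap_image[OF Cl_Int[OF assms(1)] empty_in_Cl[OF assms(1)]
          Diff_in_Cl[OF assms(3)]])
qed

lemma wbase_greatest:
  assumes "T \<in> C" "\<And>A. A \<in> C \<Longrightarrow> A \<subseteq> T"
  shows "wbase C T = Wallman C"
proof -
  have "T \<in> p" if "p \<in> Wallman C" for p
  proof -
    have p: "set_filter C p" using Wallman_filter[OF that] .
    then obtain D where "D \<in> p" "D \<in> C" by (auto simp: set_filter_def)
    then show "T \<in> p" using p assms by (auto simp: set_filter_def)
  qed
  then show ?thesis by (auto simp: wbase_def)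
qed

lemma empty_in_OpW:
  assumes "gts X Op Cov" "weakly_normal X Op"
  shows "{} \<in> OpW X Op"
proof -
  have "{} \<in> Op" by (rule gts_Op_lattice(1)[OF assms(1)])
  moreover have "wbase (Cl X Op) X = Wallman (Cl X Op)"
    by (rule wbase_greatest[OF top_in_Cl[OF assms(1)] Cl_subset])
  ultimately have "Ex_W X (Cl X Op) {} = {}"
    using Ex_W_eq_Diff_wbase[OF assms] by simp
  then show ?thesis
    using \<open>{} \<in> Op\<close> unfolding OpW_def by blast
qed

lemma Un_in_OpW:
  assumes "gts X Op Cov" "weakly_normal X Op" "a \<in> OpW X Op" "b \<in> OpW X Op"
  shows "a \<union> b \<in> OpW X Op"
proof -
  obtain U V where "U \<in> Op" "V \<in> Op" "a = Ex_W X (Cl X Op) U" "b = Ex_W X (Cl X Op) V"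
    using assms(3,4) by (auto simp: OpW_def)
  moreover have "U \<union> V \<in> Op" using gts_Op_lattice(3)[OF assms(1)] calculation(1,2) .
  moreover have "wbase (Cl X Op) (X - (U \<union> V)) = wbase (Cl X Op) (X - U) \<inter> wbase (Cl X Op) (X - V)"
    using wbase_Int[OF Diff_in_Cl Diff_in_Cl] calculation(1,2) by (simp add: Diff_Un)
  ultimately have "a \<union> b = Ex_W X (Cl X Op) (U \<union> V)"
    using Ex_W_eq_Diff_wbase[OF assms(1,2)] by auto
  then show ?thesis
    using \<open>U \<union> V \<in> Op\<close> unfolding OpW_def by blast
qed

lemma OpW_eq_Wallman_subbase_traces:
  assumes "gts X Op Cov" "weakly_normal X Op"
  shows "OpW X Op = (\<inter>) (Wallman (Cl X Op)) ` Wallman_subbase (Cl X Op)"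
proof -
  let ?C = "Cl X Op"
  have "OpW X Op = Ex_W X ?C ` Op" by (auto simp: OpW_def)
  also have "\<dots> = (\<lambda>U. Wallman ?C \<inter> (UNIV - wbase ?C (X - U))) ` Op"
    using Ex_W_eq_Diff_wbase[OF assms] by (intro image_cong) auto
  also have "\<dots> = (\<inter>) (Wallman ?C) ` Wallman_subbase ?C"
    by (simp add: Wallman_subbase_def Cl_def Setcompr_eq_image image_image)
  finally show ?thesis .
qed

theorem proposition5p14:
  fixes X :: "'a set" and Op :: "'a set set" and Cov :: "'a set set set"
  assumes "gts X Op Cov"
    and "weakly_normal X Op"
    and "compact_space (Wallman_topology (Cl X Op))"
  shows "(\<forall>\<F>. finite \<F> \<and> \<F> \<subseteq> OpW X Op \<longrightarrow> \<Union>\<F> \<in> OpW X Op)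
    \<and> subtopology (topology_generated_by (OpW X Op)) (Wallman (Cl X Op))
        = Wallman_topology (Cl X Op)"
proof (intro conjI allI impI; (elim conjE)?)
  fix \<F> assume "finite \<F>" "\<F> \<subseteq> OpW X Op"
  then show "\<Union>\<F> \<in> OpW X Op"
    by (induction \<F> rule: finite_induct)
      (simp_all add: empty_in_OpW[OF assms(1,2)] Un_in_OpW[OF assms(1,2)])
next
  let ?W = "Wallman (Cl X Op)"
  have "(\<inter>) ?W ` OpW X Op = (\<inter>) ?W ` Wallman_subbase (Cl X Op)"
    using OpW_eq_Wallman_subbase_traces[OF assms(1,2)] by (auto simp: image_image)
  then show "subtopology (topology_generated_by (OpW X Op)) ?W = Wallman_topology (Cl X Op)"
    unfolding Wallman_topology_eq by (rule subtopology_topology_generated_by_traces)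
qed

end
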